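(* Under the standing assumptions described in the context (including (H4)–(H8)), for every $k=0,\dots,N$: $$|\sigma^*_{k+1}|\le H^2h^2,\qquad |\sigma_{k+1}|\le \tfrac12 H^2h^2,\qquad |\tau_{k+1}|\le \tfrac12H^2h^2+\tfrac12K_2H^3h^3.$$
   Context: Let $T>0$ and let $g:[0,T]\to[0,\infty)$ be increasing, left-continuous, continuous at $0$, with a finite set $D_g\subset(0,T)$ of discontinuity points; $\Delta^+\varphi(t)=\varphi(t^+)-\varphi(t)$; $g^B(t)=\sum_{s\in[0,t)}\Delta^+g(s)$, $g^C=g-g^B$; $\mu_g$ is the Lebesgue–Stieltjes measure with $\mu_g([c,d))=g(d)-g(c)$. For $u:[0,T]\to\mathbb R$ the Stieltjes derivative at $t$ is $u'_g(t)=\lim_{s\to t}\frac{u(s)-u(t)}{g(s)-g(t)}$ if $t\notin D_g$ and $u'_g(t)=\frac{u(t^+)-u(t)}{\Delta^+g(t)}$ if $t\in D_g$. Let $f:[0,T]\times\mathbb R\to\mathbb R$, $x_0\in\mathbb R$, and let $x$ be the solution of $x'_g(t)=f(t,x(t))$ for $\mu_g$-a.e. $t\in[0,T)$, $x(0)=x_0$; it satisfies $x(t)=x_0+\int_{[0,t)}f(s,x(s))\,\mathrm d\mu_g(s)$ for all $t\in[0,T]$. Put $f_*(x)(t)=f(t,x(t))$, $f_*^B(x)(t)=\sum_{s\in[0,t)}\Delta^+f_*(x)(s)$, $f_*^C(x)=f_*(x)-f_*^B(x)$. A function $u$ is $g$-Lipschitz with constant $H$ if $|u(t)-u(s)|\le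 H|g(t)-g(s)|$ for all $t,s$; $g$-continuous means: for every $t_0$ and $\epsilon>0$ there is $\delta>0$ with $|g(t)-g(t_0)|<\delta\Rightarrow|u(t)-u(t_0)|<\epsilon$. Hypotheses: (H4) $0=t_0<t_1<\dots<t_{N+1}=T$ with $t_{k+1}-t_k=h>0$ for all $k$, and $D_g\subset\{t_k\}$; $K_1=\max\{\Delta^+g(d):d\in D_g\}$. (H5) $f_*(x)$ is $g$-Lipschitz with constant $H>0$, and $f_*^C(x)$ and $g^C$ are Lipschitz with constant $H$. (H6) for every $c\in\mathbb R$, $f(\cdot,c)$ is bounded and $g$-continuous on $[0,T]$. (H7) for every $t$, $f(t,\cdot)\in C^1(\mathbb R)$ and $|\partial_x f(t,x)|<K_2$ for all $(t,x)$. (H8) for every $t\in[0,T)$ and $c$, the right limit $f(t^+,c)=\lim_{s\to t^+}f(s,c)$ exists, $f(t^+,\cdot)\in C^1(\mathbb R)$ and $|\partial_x f(t^+,x)|<K_3$ for all $(t,x)$. Notation: $x_k=x(t_k)$, $x_k^+=x(t_k^+)$. Local errors, $k=0,\dots,N$: $\sigma^*_{k+1}=x_{k+1}-x_k^+-f(t_k^+,x_k^+)(g(t_{k+1})-g(t_k^+))$; $\sigma_{k+1}=x_{k+1}-x_k^+-\tfrac12(f(t_k^+,x_k^+)+f(t_{k+1},x_{k+1}))(g(t_{k+1})-g(t_k^+))$; $x^*_{k+1}=x_{k+1}-\sigma^*_{k+1}$; $\tau_{k+1}=x_{k+1}-x_k^+-\tfrac12(f(t_k^+,x_k^+)+f(t_{k+1},x^*_{k+1}))(g(t_{k+1})-g(t_k^+))$.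 *)

theory Defs
  imports "HOL-Analysis.Analysis"
begin

definition rlim :: "(real \<Rightarrow> real) \<Rightarrow> real \<Rightarrow> real" where
  "rlim \<phi> t = Lim (at_right t) \<phi>"

definition rjump :: "(real \<Rightarrow> real) \<Rightarrow> real \<Rightarrow> real" where
  "rjump \<phi> t = rlim \<phi> t - \<phi> t"

text \<open>Jump part phi^B(t) = sum of right jumps over s in [0,t) (only the nonzero ones,
  which form a finite set under the standing hypotheses), and continuous part phi^C.\<close>
definition jump_part :: "(real \<Rightarrow> real) \<Rightarrow> real \<Rightarrow> real" where
  "jump_part \<phi> t = (\<Sum>s\<in>{s\<in>{0..<t}. rjump \<phi> s \<noteq> 0}. rjump \<phi> s)"

definition cont_part :: "(real \<Rightarrow> real) \<Rightarrow> real \<Rightarrow> real" where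
  "cont_part \<phi> t = \<phi> t - jump_part \<phi> t"

definition Dg :: "real \<Rightarrow> (real \<Rightarrow> real) \<Rightarrow> real set" where
  "Dg T g = {t\<in>{0<..<T}. \<not> isCont g t}"

text \<open>Lebesgue--Stieltjes measure of g on [0,T] with mu([c,d)) = g(d) - g(c).
  g is extended constantly outside [0,T]; the left-continuous nondecreasing extension G
  is turned into the right-continuous function t -> -G(-t), whose interval measure
  (mu((a,b]) = F b - F a) is reflected back by t -> -t.\<close>
definition g_ext :: "real \<Rightarrow> (real \<Rightarrow> real) \<Rightarrow> real \<Rightarrow> real" where
  "g_ext T g t = g (max 0 (min T t))"

definition LS_measure :: "real \<Rightarrow> (real \<Rightarrow> real) \<Rightarrow> real measure" where
  "LS_measure T g = distr (interval_measure (\<lambda>t. - g_ext T g (- t))) borel uminus"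

definition g_lipschitz :: "real \<Rightarrow> (real \<Rightarrow> real) \<Rightarrow> real \<Rightarrow> (real \<Rightarrow> real) \<Rightarrow> bool" where
  "g_lipschitz T g H u \<longleftrightarrow> (\<forall>t\<in>{0..T}. \<forall>s\<in>{0..T}. \<bar>u t - u s\<bar> \<le> H * \<bar>g t - g s\<bar>)"

definition lipschitz_0T :: "real \<Rightarrow> real \<Rightarrow> (real \<Rightarrow> real) \<Rightarrow> bool" where
  "lipschitz_0T T H u \<longleftrightarrow> (\<forall>t\<in>{0..T}. \<forall>s\<in>{0..T}. \<bar>u t - u s\<bar> \<le> H * \<bar>t - s\<bar>)"

definition g_continuous :: "real \<Rightarrow> (real \<Rightarrow> real) \<Rightarrow> (real \<Rightarrow> real) \<Rightarrow> bool" where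
  "g_continuous T g u \<longleftrightarrow> (\<forall>t0\<in>{0..T}. \<forall>\<epsilon>>0. \<exists>\<delta>>0. \<forall>t\<in>{0..T}.
      \<bar>g t - g t0\<bar> < \<delta> \<longrightarrow> \<bar>u t - u t0\<bar> < \<epsilon>)"

end

theory Submission
  imports Defs
begin

text \<open>On a grid cell (t_k, t_{k+1}) the function g has no jumps, and neither has
  F = f(., x(.)), being g-Lipschitz; so both differ from their continuous parts by constants
  and are H-Lipschitz there. Thus on the cell F stays within H (u - t_k) of its right limit
  f(t_k+, x_k+) and within H (t_{k+1} - u) of F(t_{k+1}). Integrating against mu_g over
  [s, t_{k+1}) and letting s tend to t_k from the right bounds sigma* by
  H h (g(t_{k+1}) - g(t_k+)) <= H^2 h^2, and sigma by half of that. Finally tau - sigma is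
  (F(t_{k+1}) - f(t_{k+1}, x*_{k+1})) / 2 times the g-increment, and f is K_2-Lipschitz in x
  while |x_{k+1} - x*_{k+1}| = |sigma*|.\<close>

lemma mono_on_has_right_limit:
  fixes \<phi> :: "real \<Rightarrow> real"
  assumes mono: "mono_on {a..b} \<phi>" and ab: "a < b"
  shows "\<exists>L. (\<phi> \<longlongrightarrow> L) (at_right a)"
proof -
  have "({a<..} \<inter> {a..b}) - {a} = {a..b} - {a}" by auto
  then have "at a within ({a<..} \<inter> {a..b}) = at_right a"
    unfolding at_within_Icc_at_right[OF ab, symmetric] by (simp only: at_within_def)
  moreover have "(\<phi> \<longlongrightarrow> Inf (\<phi> ` ({a<..} \<inter> {a..b}))) (at a within ({a<..} \<inter> {a..b}))"
    by (rule Lim_right_bound[where K="\<phi> a"]) (auto intro: mono_onD[OF mono])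
  ultimately show ?thesis by auto
qed

lemma rlim_eqI: "(\<phi> \<longlongrightarrow> L) (at_right t) \<Longrightarrow> rlim \<phi> t = L"
  unfolding rlim_def by (rule tendsto_Lim[OF trivial_limit_at_right_real])

lemma rjump_eq_0_if_right_continuous: "(\<phi> \<longlongrightarrow> \<phi> t) (at_right t) \<Longrightarrow> rjump \<phi> t = 0"
  unfolding rjump_def by (simp add: rlim_eqI)

lemma jump_part_eq_if_no_jumps:
  assumes no_jumps: "\<And>s. a < s \<Longrightarrow> s < b \<Longrightarrow> rjump \<phi> s = 0"
    and r: "r \<in> {a<..b}" and r': "r' \<in> {a<..b}"
  shows "jump_part \<phi> r = jump_part \<phi> r'"
proof -
  have "{s\<in>{0..<r}. rjump \<phi> s \<noteq> 0} = {s\<in>{0..<r'}. rjump \<phi> s \<noteq> 0}"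
    using no_jumps r r' by (auto simp: not_less) (meson less_le_trans not_le)+
  then show ?thesis unfolding jump_part_def by simp
qed

lemma lipschitz_on_if_no_jumps:
  assumes lip: "lipschitz_0T T H (cont_part \<phi>)" and H: "0 \<le> H" and ab: "0 \<le> a" "b \<le> T"
    and no_jumps: "\<And>s. a < s \<Longrightarrow> s < b \<Longrightarrow> rjump \<phi> s = 0"
  shows "H-lipschitz_on {a<..b} \<phi>"
proof (rule lipschitz_onI)
  fix r r' assume r: "r \<in> {a<..b}" and r': "r' \<in> {a<..b}"
  have "\<phi> r - \<phi> r' = cont_part \<phi> r - cont_part \<phi> r'"
    using jump_part_eq_if_no_jumps[OF no_jumps r r'] unfolding cont_part_def by simp
  then show "dist (\<phi> r) (\<phi> r') \<le> H * dist r r'"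
    using lip ab r r' unfolding lipschitz_0T_def dist_real_def by auto
qed (fact H)

lemma lipschitz_on_right_limit_bound:
  fixes \<phi> :: "real \<Rightarrow> real"
  assumes lip: "H-lipschitz_on {a<..b} \<phi>" and lim: "(\<phi> \<longlongrightarrow> c) (at_right a)"
    and u: "u \<in> {a<..b}"
  shows "\<bar>\<phi> u - c\<bar> \<le> H * (u - a)"
proof (rule tendsto_le[OF trivial_limit_at_right_real])
  show "((\<lambda>r. H * (u - r)) \<longlongrightarrow> H * (u - a)) (at_right a)"
    by (intro tendsto_intros)
  show "((\<lambda>r. \<bar>\<phi> u - \<phi> r\<bar>) \<longlongrightarrow> \<bar>\<phi> u - c\<bar>) (at_right a)"
    by (intro tendsto_intros lim)
  have "eventually (\<lambda>r. r \<in> {a<..<u}) (at_right a)"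
    using u by (intro eventually_at_right_real) auto
  then show "eventually (\<lambda>r. \<bar>\<phi> u - \<phi> r\<bar> \<le> H * (u - r)) (at_right a)"
  proof eventually_elim
    case (elim r)
    then have "dist (\<phi> u) (\<phi> r) \<le> H * dist u r" using u by (intro lipschitz_onD[OF lip]) auto
    with elim show ?case by (simp add: dist_real_def)
  qed
qed

lemma mono_g_ext:
  assumes "0 \<le> T" "mono_on {0..T} g"
  shows "mono (g_ext T g)"
  unfolding g_ext_def using assms by (intro monoI mono_onD[OF assms(2)]) auto

lemma g_ext_left_continuous:
  assumes left_cont: "\<forall>t\<in>{0<..T}. (g \<longlongrightarrow> g t) (at_left t)"
  shows "(g_ext T g \<longlongrightarrow> g_ext T g u) (at_left u)"
proof -
  consider "u \<le> 0" | "T < u" | "0 < u" "u \<le> T" by linarith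
  then show ?thesis
  proof cases
    case 1
    have "eventually (\<lambda>v. g_ext T g v = g_ext T g u) (at_left u)"
      by (rule eventually_at_leftI[of "u - 1"]) (use 1 in \<open>auto simp: g_ext_def\<close>)
    then show ?thesis by (rule tendsto_eventually)
  next
    case 2
    have "eventually (\<lambda>v. g_ext T g v = g_ext T g u) (at_left u)"
      by (rule eventually_at_leftI[of T]) (use 2 in \<open>auto simp: g_ext_def\<close>)
    then show ?thesis by (rule tendsto_eventually)
  next
    case 3
    have "eventually (\<lambda>v. g v = g_ext T g v) (at_left u)"
      by (rule eventually_at_leftI[of 0]) (use 3 in \<open>auto simp: g_ext_def\<close>)
    moreover have "(g \<longlongrightarrow> g_ext T g u) (at_left u)"
      using left_cont 3 by (auto simp: g_ext_def)
    ultimately show ?thesis by (rule Lim_transform_eventually[rotated])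
  qed
qed

lemma sets_LS_measure: "sets (LS_measure T g) = sets borel"
  unfolding LS_measure_def by simp

lemma emeasure_LS_measure_Ico:
  assumes "mono_on {0..T} g" "\<forall>t\<in>{0<..T}. (g \<longlongrightarrow> g t) (at_left t)"
    and "0 \<le> s" "s \<le> t" "t \<le> T"
  shows "emeasure (LS_measure T g) {s..<t} = ennreal (g t - g s)"
proof -
  define F where "F = (\<lambda>t. - g_ext T g (- t))"
  have "mono (g_ext T g)" using assms by (intro mono_g_ext) auto
  then have F_mono: "F u \<le> F v" if "u \<le> v" for u v
    unfolding F_def using that by (simp add: monoD)
  have F_right_cont: "continuous (at_right a) F" for a
  proof -
    have "((\<lambda>v. - g_ext T g v) \<longlongrightarrow> - g_ext T g (- a)) (at_left (- a))"
      by (intro tendsto_minus g_ext_left_continuous assms)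
    then have "(F \<longlongrightarrow> F a) (at_right a)"
      unfolding at_right_minus filterlim_filtermap F_def by (simp add: o_def)
    then show ?thesis by (simp add: continuous_within)
  qed
  have "uminus \<in> measurable (interval_measure F) borel"
    using measurable_cong_sets[OF sets_interval_measure refl] by auto
  then have "emeasure (LS_measure T g) {s..<t}
      = emeasure (interval_measure F) (uminus -` {s..<t} \<inter> space (interval_measure F))"
    unfolding LS_measure_def F_def by (intro emeasure_distr) auto
  also have "uminus -` {s..<t} \<inter> space (interval_measure F) = {-t<..-s}"
    by (auto simp: space_interval_measure)
  also have "emeasure (interval_measure F) {-t<..-s} = F (-s) - F (-t)"
    using assms by (intro emeasure_interval_measure_Ioc F_mono F_right_cont) auto
  also have "F (-s) - F (-t) = g t - g s"
    using assms by (simp add: F_def g_ext_def)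
  finally show ?thesis .
qed

lemma set_integral_deviation_bound:
  fixes \<phi> :: "real \<Rightarrow> real"
  assumes int: "set_integrable M A \<phi>" and A: "A \<in> sets M"
    and m: "emeasure M A = ennreal m" "0 \<le> m"
    and bound: "\<forall>u\<in>A. \<bar>\<phi> u - c\<bar> \<le> K"
  shows "\<bar>(LINT u:A|M. \<phi> u) - c * m\<bar> \<le> K * m"
proof -
  have fin: "emeasure M A < \<infinity>" using m by simp
  have const_int: "set_integrable M A (\<lambda>_. d)" for d :: real
    unfolding set_integrable_def
    by (rule integrableI_bounded_set_indicator[where B="\<bar>d\<bar>"]) (use A fin in auto)
  have const: "(LINT u:A|M. d) = d * m" for d :: real
    using set_integral_const[of A M d] A fin m by (simp add: measure_def mult.commute)
  have "(LINT u:A|M. \<phi> u) - c * m = (LINT u:A|M. \<phi> u - c)"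
    using set_integral_diff(2)[OF int const_int[of c]] const[of c] by simp
  moreover have "(LINT u:A|M. \<phi> u - c) \<le> (LINT u:A|M. K)"
    by (rule set_integral_mono) (use int const_int bound in \<open>auto simp: abs_le_iff\<close>)
  moreover have "(LINT u:A|M. -K) \<le> (LINT u:A|M. \<phi> u - c)"
    by (rule set_integral_mono) (use int const_int bound in \<open>auto simp: abs_le_iff\<close>)
  ultimately show ?thesis using const[of K] const[of "-K"] by (simp add: abs_le_iff)
qed

lemma abs_diff_midpoint_le:
  fixes p c d A B :: real
  assumes "\<bar>p - c\<bar> \<le> A" "\<bar>p - d\<bar> \<le> B"
  shows "\<bar>p - (c + d) / 2\<bar> \<le> (A + B) / 2"
  using assms by (simp add: abs_le_iff field_simps)

locale grid_ode =
  fixes T h H K x0 :: real and N :: nat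
    and g x :: "real \<Rightarrow> real" and f fp :: "real \<Rightarrow> real \<Rightarrow> real"
  assumes h_pos: "0 < h"
    and T_eq: "T = real (Suc N) * h"
    and g_mono: "mono_on {0..T} g"
    and g_left_cont: "\<forall>t\<in>{0<..T}. (g \<longlongrightarrow> g t) (at_left t)"
    and discontinuities_on_grid: "Dg T g \<subseteq> {real k * h | k. k \<le> Suc N}"
    and solution: "\<forall>t\<in>{0..T}. x t = x0 + (LINT s:{0..<t}|LS_measure T g. f s (x s))"
    and H_nonneg: "0 \<le> H"
    and F_g_lipschitz: "g_lipschitz T g H (\<lambda>t. f t (x t))"
    and F_cont_part_lipschitz: "lipschitz_0T T H (cont_part (\<lambda>t. f t (x t)))"
    and g_cont_part_lipschitz: "lipschitz_0T T H (cont_part g)"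
    and f_lipschitz: "\<And>t. t \<in> {0..T} \<Longrightarrow> K-lipschitz_on UNIV (f t)"
    and fp_right_limit: "\<And>t c. t \<in> {0..<T} \<Longrightarrow> ((\<lambda>s. f s c) \<longlongrightarrow> fp t c) (at_right t)"
begin

abbreviation F :: "real \<Rightarrow> real" where "F t \<equiv> f t (x t)"

abbreviation \<mu> :: "real measure" where "\<mu> \<equiv> LS_measure T g"

lemma T_pos: "0 < T"
  using h_pos by (simp add: T_eq)

lemma g_le: "0 \<le> s \<Longrightarrow> s \<le> t \<Longrightarrow> t \<le> T \<Longrightarrow> g s \<le> g t"
  using g_mono by (auto intro: mono_onD)

lemma grid_cell_bounds: "k \<le> N \<Longrightarrow> 0 \<le> real k * h \<and> real (Suc k) * h \<le> T"
  using h_pos by (auto simp: T_eq intro!: mult_right_mono)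

lemma between_grid_points:
  assumes t: "t \<in> {0..T}" "t \<notin> (\<lambda>k. real k * h) ` {..Suc N}"
  obtains k where "k \<le> N" "real k * h < t" "t < real (Suc k) * h"
proof
  define k where "k = nat \<lfloor>t / h\<rfloor>"
  have "real k = of_int \<lfloor>t / h\<rfloor>" using t h_pos unfolding k_def by simp
  then have "real k \<le> t / h" "t / h < real k + 1" by linarith+
  then have lower: "real k * h \<le> t" and upper: "t < real (Suc k) * h"
    using h_pos by (simp_all add: le_divide_eq divide_less_eq algebra_simps)
  have "real k * h \<le> real (Suc N) * h" using lower t T_eq by simp
  then have "k \<le> Suc N" using h_pos by simp
  then show "real k * h < t" using lower t by (cases "real k * h = t") auto
  have "t \<noteq> real (Suc N) * h" using t by blast
  then have "t < real (Suc N) * h" using t T_eq by simp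
  then have "real k * h < real (Suc N) * h" using \<open>real k * h < t\<close> by linarith
  then show "k \<le> N" using h_pos by simp
  show "t < real (Suc k) * h" by (fact upper)
qed

lemma isCont_g_between_grid_points:
  assumes k: "k \<le> N" "real k * h < s" "s < real (Suc k) * h"
  shows "isCont g s"
proof (rule ccontr)
  assume "\<not> isCont g s"
  moreover have "0 < s" "s < T" using grid_cell_bounds[OF k(1)] k by linarith+
  ultimately have "s \<in> Dg T g" by (simp add: Dg_def)
  then obtain j where j: "s = real j * h" using discontinuities_on_grid by blast
  then have "k < j" "j < Suc k" using k h_pos by (simp_all add: mult_less_cancel_right)
  then show False by simp
qed

lemma F_right_continuous_if_g:
  assumes s: "s \<in> {0..<T}" and g_right: "(g \<longlongrightarrow> g s) (at_right s)"
  shows "(F \<longlongrightarrow> F s) (at_right s)"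
proof -
  have "((\<lambda>r. F r - F s) \<longlongrightarrow> 0) (at_right s)"
  proof (rule Lim_null_comparison)
    show "eventually (\<lambda>r. norm (F r - F s) \<le> H * \<bar>g r - g s\<bar>) (at_right s)"
      using eventually_at_right_real[of s T] s
      by (auto elim!: eventually_mono simp: g_lipschitz_def F_g_lipschitz[unfolded g_lipschitz_def])
    show "((\<lambda>r. H * \<bar>g r - g s\<bar>) \<longlongrightarrow> 0) (at_right s)"
      using tendsto_mult[OF tendsto_const[of H] tendsto_rabs[OF LIM_zero[OF g_right]]] by simp
  qed
  then show ?thesis by (rule LIM_zero_cancel)
qed

lemma lipschitz_on_grid_cell:
  assumes k: "k \<le> N"
  shows "H-lipschitz_on {real k * h<..real (Suc k) * h} g"
    and "H-lipschitz_on {real k * h<..real (Suc k) * h} F"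
proof -
  have g_right: "(g \<longlongrightarrow> g s) (at_right s)"
    if "real k * h < s" "s < real (Suc k) * h" for s
    using isCont_g_between_grid_points[OF k that] by (simp add: isCont_def filterlim_at_split)
  show "H-lipschitz_on {real k * h<..real (Suc k) * h} g"
    using g_right grid_cell_bounds[OF k]
    by (intro lipschitz_on_if_no_jumps[OF g_cont_part_lipschitz H_nonneg]
        rjump_eq_0_if_right_continuous) auto
  have "s \<in> {0..<T}" if "real k * h < s" "s < real (Suc k) * h" for s
    using grid_cell_bounds[OF k] that by auto
  then show "H-lipschitz_on {real k * h<..real (Suc k) * h} F"
    using g_right grid_cell_bounds[OF k]
    by (intro lipschitz_on_if_no_jumps[OF F_cont_part_lipschitz H_nonneg]
        rjump_eq_0_if_right_continuous F_right_continuous_if_g) auto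
qed

lemma F_bounded: obtains B where "\<And>t. t \<in> {0..T} \<Longrightarrow> \<bar>F t\<bar> \<le> B"
proof
  fix t assume t: "t \<in> {0..T}"
  have "\<bar>F t - F 0\<bar> \<le> H * \<bar>g t - g 0\<bar>"
    using F_g_lipschitz t unfolding g_lipschitz_def by auto
  also have "\<dots> \<le> H * (g T - g 0)"
    using g_le[of 0 t] g_le[of t T] t H_nonneg by (intro mult_left_mono) auto
  finally show "\<bar>F t\<bar> \<le> \<bar>F 0\<bar> + H * (g T - g 0)" by linarith
qed

text \<open>F is arbitrary outside [0,T]; clamping the argument makes it continuous off the grid.\<close>
lemma borel_measurable_F_clamped: "(\<lambda>t. F (max 0 (min T t))) \<in> borel_measurable borel"
proof (rule borel_measurable_continuous_countable_exceptions)
  define grid where "grid = (\<lambda>k. real k * h) ` {..Suc N}"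
  show "countable grid" unfolding grid_def by simp
  show "continuous_on (- grid) (\<lambda>t. F (max 0 (min T t)))"
  proof (intro continuous_at_imp_continuous_on ballI)
    fix t assume t: "t \<in> - grid"
    obtain U where U: "open U" "t \<in> U" "continuous_on U (\<lambda>t. F (max 0 (min T t)))"
    proof -
      consider "t < 0" | "T < t" | "t \<in> {0..T}" by fastforce
      then show thesis
      proof cases
        case 1
        then show thesis by (intro that[of "{..<0}"] continuous_on_cong[THEN iffD2, OF refl _
              continuous_on_const[of _ "F 0"]]) auto
      next
        case 2
        then show thesis
          using T_pos by (intro that[of "{T<..}"] continuous_on_cong[THEN iffD2, OF refl _
              continuous_on_const[of _ "F T"]]) auto
      next
        case 3
        then obtain k where k: "k \<le> N" "real k * h < t" "t < real (Suc k) * h"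
          using t by (auto intro: between_grid_points simp: grid_def)
        have "H-lipschitz_on {real k * h<..<real (Suc k) * h} F"
          by (rule lipschitz_on_subset[OF lipschitz_on_grid_cell(2)[OF k(1)]]) auto
        then have "continuous_on {real k * h<..<real (Suc k) * h} F"
          by (rule lipschitz_on_continuous_on)
        then have "continuous_on {real k * h<..<real (Suc k) * h} (\<lambda>t. F (max 0 (min T t)))"
          by (rule continuous_on_eq) (use grid_cell_bounds[OF k(1)] in auto)
        then show thesis using k by (intro that[of "{real k * h<..<real (Suc k) * h}"]) auto
      qed
    qed
    then show "isCont (\<lambda>t. F (max 0 (min T t))) t"
      using continuous_on_eq_continuous_at by blast
  qed
qed

lemma set_integrable_F:
  assumes "0 \<le> s" "s \<le> t" "t \<le> T"
  shows "set_integrable \<mu> {s..<t} F"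
proof -
  obtain B where B: "\<And>t. t \<in> {0..T} \<Longrightarrow> \<bar>F t\<bar> \<le> B" using F_bounded by blast
  have "set_integrable \<mu> {s..<t} (\<lambda>t. F (max 0 (min T t)))"
    unfolding set_integrable_def
  proof (rule integrableI_bounded_set_indicator[where B=B])
    show "{s..<t} \<in> sets \<mu>"
      unfolding sets_LS_measure by simp
    show "(\<lambda>t. F (max 0 (min T t))) \<in> borel_measurable \<mu>"
      using borel_measurable_F_clamped unfolding measurable_cong_sets[OF sets_LS_measure refl] .
    show "emeasure \<mu> {s..<t} < \<infinity>"
      using emeasure_LS_measure_Ico[OF g_mono g_left_cont assms] by simp
    show "AE u in \<mu>. u \<in> {s..<t} \<longrightarrow> norm (F (max 0 (min T u))) \<le> B"
      using B assms by (intro AE_I2) auto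
  qed
  moreover have "set_integrable \<mu> {s..<t} (\<lambda>t. F (max 0 (min T t)))
      = set_integrable \<mu> {s..<t} F"
    using assms by (intro set_integrable_cong) auto
  ultimately show ?thesis by simp
qed

lemma x_increment:
  assumes st: "0 \<le> s" "s \<le> t" "t \<le> T"
  shows "x t - x s = (LINT u:{s..<t}|\<mu>. F u)"
proof -
  have "{0..<s} \<union> {s..<t} = {0..<t}" using st by auto
  moreover have "(LINT u:{0..<s} \<union> {s..<t}|\<mu>. F u)
      = (LINT u:{0..<s}|\<mu>. F u) + (LINT u:{s..<t}|\<mu>. F u)"
    using st by (intro set_integral_Un set_integrable_F) auto
  ultimately show ?thesis using solution st by simp
qed

lemma x_increment_estimate:
  assumes st: "0 \<le> s" "s \<le> t" "t \<le> T" and bound: "\<forall>u\<in>{s..<t}. \<bar>F u - c\<bar> \<le> M"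
  shows "\<bar>x t - x s - c * (g t - g s)\<bar> \<le> M * (g t - g s)"
  using set_integral_deviation_bound[OF set_integrable_F[OF st] _
      emeasure_LS_measure_Ico[OF g_mono g_left_cont st] _ bound] g_le[OF st] x_increment[OF st]
  by (simp add: sets_LS_measure)

lemma tendsto_rlim_g:
  assumes a: "a \<in> {0..<T}"
  shows "(g \<longlongrightarrow> rlim g a) (at_right a)"
proof -
  have "mono_on {a..T} g" by (rule mono_on_subset[OF g_mono]) (use a in auto)
  then obtain L where "(g \<longlongrightarrow> L) (at_right a)" using mono_on_has_right_limit a by fastforce
  with rlim_eqI[OF this] show ?thesis by simp
qed

text \<open>x + B g is nondecreasing when B bounds |F|, so x is a difference of monotone functions.\<close>
lemma tendsto_rlim_x:
  assumes a: "a \<in> {0..<T}"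
  shows "(x \<longlongrightarrow> rlim x a) (at_right a)"
proof -
  obtain B where B: "\<And>t. t \<in> {0..T} \<Longrightarrow> \<bar>F t\<bar> \<le> B" using F_bounded by blast
  have "x s + B * g s \<le> x t + B * g t" if "0 \<le> s" "s \<le> t" "t \<le> T" for s t
    using x_increment_estimate[OF that, of 0 B] B that by (auto simp: algebra_simps abs_le_iff)
  then have "mono_on {a..T} (\<lambda>t. x t + B * g t)" using a by (intro mono_onI) auto
  then obtain L where "((\<lambda>t. x t + B * g t) \<longlongrightarrow> L) (at_right a)"
    using mono_on_has_right_limit a by fastforce
  from tendsto_diff[OF this tendsto_mult[OF tendsto_const[of B] tendsto_rlim_g[OF a]]]
  have "(x \<longlongrightarrow> L - B * rlim g a) (at_right a)" by simp
  then show ?thesis by (simp add: rlim_eqI)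
qed

lemma tendsto_rlim_F:
  assumes a: "a \<in> {0..<T}"
  shows "(F \<longlongrightarrow> fp a (rlim x a)) (at_right a)"
proof -
  have "((\<lambda>r. F r - f r (rlim x a)) \<longlongrightarrow> 0) (at_right a)"
  proof (rule Lim_null_comparison)
    have "eventually (\<lambda>r. r \<in> {a<..<T}) (at_right a)"
      using a by (intro eventually_at_right_real) auto
    then show "eventually (\<lambda>r. norm (F r - f r (rlim x a)) \<le> K * \<bar>x r - rlim x a\<bar>) (at_right a)"
    proof eventually_elim
      case (elim r)
      then have "K-lipschitz_on UNIV (f r)" using a by (intro f_lipschitz) auto
      then show ?case using lipschitz_on_normD[of K UNIV "f r" "x r" "rlim x a"] by simp
    qed
    show "((\<lambda>r. K * \<bar>x r - rlim x a\<bar>) \<longlongrightarrow> 0) (at_right a)"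
      using tendsto_mult[OF tendsto_const[of K] tendsto_rabs[OF LIM_zero[OF tendsto_rlim_x[OF a]]]]
      by simp
  qed
  from tendsto_add[OF this fp_right_limit[OF a, of "rlim x a"]] show ?thesis by simp
qed

context
  fixes k :: nat and a b :: real
  assumes k: "k \<le> N" and a_eq: "a = real k * h" and b_eq: "b = real (Suc k) * h"
begin

lemma grid_cell: "0 \<le> a" "a < b" "b \<le> T" "b - a = h"
  using grid_cell_bounds[OF k] h_pos by (auto simp: a_eq b_eq algebra_simps)

lemma lipschitz_on_cell_g: "H-lipschitz_on {a<..b} g"
  using lipschitz_on_grid_cell(1)[OF k] by (simp add: a_eq b_eq)

lemma lipschitz_on_cell_F: "H-lipschitz_on {a<..b} F"
  using lipschitz_on_grid_cell(2)[OF k] by (simp add: a_eq b_eq)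

lemma right_increment_estimate:
  assumes bound: "\<forall>u\<in>{a<..<b}. \<bar>F u - c\<bar> \<le> M"
  shows "\<bar>x b - rlim x a - c * (g b - rlim g a)\<bar> \<le> M * (g b - rlim g a)"
proof (rule tendsto_le[OF trivial_limit_at_right_real])
  have a: "a \<in> {0..<T}" using grid_cell by auto
  show "((\<lambda>s. M * (g b - g s)) \<longlongrightarrow> M * (g b - rlim g a)) (at_right a)"
    by (intro tendsto_intros tendsto_rlim_g[OF a])
  show "((\<lambda>s. \<bar>x b - x s - c * (g b - g s)\<bar>)
      \<longlongrightarrow> \<bar>x b - rlim x a - c * (g b - rlim g a)\<bar>) (at_right a)"
    by (intro tendsto_intros tendsto_rlim_g[OF a] tendsto_rlim_x[OF a])
  have "eventually (\<lambda>s. s \<in> {a<..<b}) (at_right a)"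
    using grid_cell by (intro eventually_at_right_real) auto
  then show "eventually (\<lambda>s. \<bar>x b - x s - c * (g b - g s)\<bar> \<le> M * (g b - g s)) (at_right a)"
    by eventually_elim (use bound grid_cell in \<open>auto intro!: x_increment_estimate\<close>)
qed

lemma g_right_increment_bound: "\<bar>g b - rlim g a\<bar> \<le> H * h"
  using lipschitz_on_right_limit_bound[OF lipschitz_on_cell_g tendsto_rlim_g] grid_cell by auto

lemma F_deviation_from_right_limit: "u \<in> {a<..b} \<Longrightarrow> \<bar>F u - fp a (rlim x a)\<bar> \<le> H * (u - a)"
  using lipschitz_on_right_limit_bound[OF lipschitz_on_cell_F tendsto_rlim_F] grid_cell by auto

lemma sigma_star_bound:
  "\<bar>x b - rlim x a - fp a (rlim x a) * (g b - rlim g a)\<bar> \<le> H\<^sup>2 * h\<^sup>2"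
proof -
  have "\<forall>u\<in>{a<..<b}. \<bar>F u - fp a (rlim x a)\<bar> \<le> H * h"
    using F_deviation_from_right_limit grid_cell H_nonneg
    by (force intro: order_trans[OF _ mult_left_mono])
  then have "\<bar>x b - rlim x a - fp a (rlim x a) * (g b - rlim g a)\<bar> \<le> (H * h) * (g b - rlim g a)"
    by (rule right_increment_estimate)
  also have "\<dots> \<le> (H * h) * (H * h)"
    using g_right_increment_bound H_nonneg h_pos by (intro mult_left_mono) auto
  finally show ?thesis by (simp add: power2_eq_square algebra_simps)
qed

lemma sigma_bound:
  "\<bar>x b - rlim x a - (fp a (rlim x a) + F b) / 2 * (g b - rlim g a)\<bar> \<le> H\<^sup>2 * h\<^sup>2 / 2"
proof -
  have "\<bar>F u - (fp a (rlim x a) + F b) / 2\<bar> \<le> H * h / 2" if u: "u \<in> {a<..<b}" for u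
  proof -
    have "\<bar>F u - fp a (rlim x a)\<bar> \<le> H * (u - a)"
      using u by (intro F_deviation_from_right_limit) auto
    moreover have "\<bar>F u - F b\<bar> \<le> H * (b - u)"
      using lipschitz_onD[OF lipschitz_on_cell_F, of u b] u grid_cell by (auto simp: dist_real_def)
    ultimately have "\<bar>F u - (fp a (rlim x a) + F b) / 2\<bar> \<le> (H * (u - a) + H * (b - u)) / 2"
      by (rule abs_diff_midpoint_le)
    also have "H * (u - a) + H * (b - u) = H * h"
      using grid_cell(4) by (simp add: algebra_simps)
    finally show ?thesis .
  qed
  then have "\<bar>x b - rlim x a - (fp a (rlim x a) + F b) / 2 * (g b - rlim g a)\<bar>
      \<le> (H * h / 2) * (g b - rlim g a)"
    by (intro right_increment_estimate) auto
  also have "\<dots> \<le> (H * h / 2) * (H * h)"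
    using g_right_increment_bound H_nonneg h_pos by (intro mult_left_mono) auto
  finally show ?thesis by (simp add: power2_eq_square algebra_simps)
qed

lemma tau_bound:
  assumes e: "\<bar>e\<bar> \<le> H\<^sup>2 * h\<^sup>2"
  shows "\<bar>x b - rlim x a - (fp a (rlim x a) + f b (x b - e)) / 2 * (g b - rlim g a)\<bar>
    \<le> H\<^sup>2 * h\<^sup>2 / 2 + K * H ^ 3 * h ^ 3 / 2"
proof -
  have K: "K-lipschitz_on UNIV (f b)" using grid_cell by (intro f_lipschitz) auto
  have "\<bar>F b - f b (x b - e)\<bar> \<le> K * \<bar>e\<bar>"
    using lipschitz_on_normD[OF K, of "x b" "x b - e"] by simp
  also have "\<dots> \<le> K * (H\<^sup>2 * h\<^sup>2)"
    using e lipschitz_on_nonneg[OF K] by (intro mult_left_mono)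
  finally have "\<bar>(F b - f b (x b - e)) / 2 * (g b - rlim g a)\<bar>
      \<le> K * (H\<^sup>2 * h\<^sup>2) / 2 * (H * h)"
    using g_right_increment_bound by (simp add: abs_mult mult_mono)
  also have "\<dots> = K * H ^ 3 * h ^ 3 / 2"
    by (simp add: power2_eq_square power3_eq_cube)
  finally show ?thesis using sigma_bound by (simp add: field_simps abs_le_iff)
qed

end

end

theorem mainTheorem8:
  fixes T h H K2 K3 x0 :: real and N :: nat
    and g x :: "real \<Rightarrow> real"
    and f fx fp fpx :: "real \<Rightarrow> real \<Rightarrow> real"
  assumes T_pos: "T > 0"
    and g_mono: "mono_on {0..T} g"
    and g_nonneg: "\<forall>t\<in>{0..T}. g t \<ge> 0"
    and g_left_cont: "\<forall>t\<in>{0<..T}. (g \<longlongrightarrow> g t) (at_left t)"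
    and g_cont_0: "(g \<longlongrightarrow> g 0) (at_right 0)"
    and Dg_finite: "finite (Dg T g)"
    and H4_h: "h > 0"
    and H4_T: "T = real (Suc N) * h"
    and H4_D: "Dg T g \<subseteq> {real k * h | k. k \<le> Suc N}"
    and sol_init: "x 0 = x0"
    and sol_int: "\<forall>t\<in>{0..T}. x t = x0 + (LINT s:{0..<t}|LS_measure T g. f s (x s))"
    and H5_pos: "H > 0"
    and H5_glip: "g_lipschitz T g H (\<lambda>t. f t (x t))"
    and H5_fC: "lipschitz_0T T H (cont_part (\<lambda>t. f t (x t)))"
    and H5_gC: "lipschitz_0T T H (cont_part g)"
    and H6_bdd: "\<forall>c. \<exists>B. \<forall>t\<in>{0..T}. \<bar>f t c\<bar> \<le> B"
    and H6_gcont: "\<forall>c. g_continuous T g (\<lambda>t. f t c)"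
    and H7_deriv: "\<forall>t\<in>{0..T}. \<forall>y. (f t has_real_derivative fx t y) (at y)"
    and H7_C1: "\<forall>t\<in>{0..T}. continuous_on UNIV (fx t)"
    and H7_bd: "\<forall>t\<in>{0..T}. \<forall>y. \<bar>fx t y\<bar> < K2"
    and H8_lim: "\<forall>t\<in>{0..<T}. \<forall>c. ((\<lambda>s. f s c) \<longlongrightarrow> fp t c) (at_right t)"
    and H8_deriv: "\<forall>t\<in>{0..<T}. \<forall>y. (fp t has_real_derivative fpx t y) (at y)"
    and H8_C1: "\<forall>t\<in>{0..<T}. continuous_on UNIV (fpx t)"
    and H8_bd: "\<forall>t\<in>{0..<T}. \<forall>y. \<bar>fpx t y\<bar> < K3"
  shows "\<forall>k\<le>N.
    (let tk = real k * h; tk1 = real (Suc k) * h;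
         xk1 = x tk1; xkp = rlim x tk; dg = g tk1 - rlim g tk;
         \<sigma>s = xk1 - xkp - fp tk xkp * dg;
         \<sigma> = xk1 - xkp - (fp tk xkp + f tk1 xk1) / 2 * dg;
         xs = xk1 - \<sigma>s;
         \<tau> = xk1 - xkp - (fp tk xkp + f tk1 xs) / 2 * dg
     in \<bar>\<sigma>s\<bar> \<le> H\<^sup>2 * h\<^sup>2
      \<and> \<bar>\<sigma>\<bar> \<le> H\<^sup>2 * h\<^sup>2 / 2
      \<and> \<bar>\<tau>\<bar> \<le> H\<^sup>2 * h\<^sup>2 / 2 + K2 * H^3 * h^3 / 2)"
proof -
  have f_lipschitz: "K2-lipschitz_on UNIV (f t)" if t: "t \<in> {0..T}" for t
  proof (rule lipschitz_onI)
    show "dist (f t p) (f t q) \<le> K2 * dist p q" for p q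
      using field_differentiable_bound[of UNIV "f t" "fx t" K2 p q] H7_deriv H7_bd t
      by (auto simp: dist_norm less_imp_le)
    show "0 \<le> K2" using H7_bd t by (meson abs_ge_zero less_imp_le order_trans)
  qed
  interpret grid_ode T h H K2 x0 N g x f fp
    using H4_h H4_T g_mono g_left_cont H4_D sol_int H5_pos H5_glip H5_fC H5_gC f_lipschitz H8_lim
    by unfold_locales auto
  show ?thesis
    unfolding Let_def
    using sigma_star_bound[OF _ refl refl] sigma_bound[OF _ refl refl] tau_bound[OF _ refl refl]
    by blast
qed

end
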